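(* In the setting $|H|=1$ of the context (with Assumption 1), the convex relaxation (R1) is exact (its optimal value equals $c^\star$) if the convex problem $\min\ \sum_{j\in N}x_j^2-w_1$ over $(\boldsymbol{\mu},{\bf x},w_1)\in\mathbb{R}^m\times\mathbb{R}^n\times\mathbb{R}$ subject to $d_1^*+\sum_{i\in M}\xi_i\mu_i=0$; $c_1+\sum_{i\in M}a_{i1}\mu_i=0$; $(D_{jj}-d_1^* )x_j+c_j+\sum_{i\in M}a_{ij}\mu_i=0$ for $j\in N\setminus\{1\}$; $\xi_iw_1+2\sum_{j\in N}a_{ij}x_j\le b_i$ for $i\in M$; $\mu_i\ge0$ for $i\in M$, has nonnegative optimal value (with the convention that an infeasible problem has optimal value $+\infty$).
   Context: Let $N=\{1,\dots,n\}$, $M=\{1,\dots,m\}$. Data: reals $D_{jj}$ ($j\in N$), $c_j$, $a_{ij}$, $b_i$, $\xi_i$ ($i\in M$, $j\in N$). The diagonal QCQP (P) is $c^\star=\inf\{\sum_{j}D_{jj}x_j^2+2\sum_jc_jx_j : \xi_i\sum_jx_j^2+2\sum_ja_{ij}x_j\le b_i,\ i\in M\}$, i.e. all constraint Hessians are ${\bf A}^i=\xi_i{\bf I}$. Its Shor relaxation is $v^\star=\inf\{{\bf D}\bullet{\bf X}+2{\bf c}^\top{\bf x} : \xi_i\,\mathrm{trace}({\bf X})+2{\bf a}_i^\top{\bf x}\le b_i\ (i\in M),\ {\bf X}-{\bf x}{\bf x}^\top\succeq{\bf O}\}$ with ${\bf D}=\mathrm{diag}(D_{jj})$. Assumption 1: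 (P) is feasible; some $\bar{\bf y}\ge0$ has $\sum_i\bar y_i\xi_i>0$; the Shor relaxation has a feasible point in the interior of its feasible region. It is assumed that $d_1^*=\min_{j\in N}D_{jj}$ is attained uniquely at $j=1$. The convex relaxation (R1) is: $\min\ d_1^*w_1+\sum_{j\in N}(D_{jj}-d_1^* )x_j^2+2\sum_{j\in N}c_jx_j$ s.t. $\xi_iw_1+2\sum_{j\in N}a_{ij}x_j\le b_i$ ($i\in M$), $\sum_{j\in N}x_j^2\le w_1$; its optimal value equals $v^\star$. *)

theory Defs
  imports Complex_Main "HOL-Library.Extended_Real"
begin

text \<open>Vectors in R^n are functions nat => real, index set N = {1..n};
  symmetric matrices are nat => nat => real restricted to N x N;
  constraint index set M = {1..m}. Optimal values are extended reals
  (Inf of the empty set is +infinity).\<close>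

definition qobj :: "nat \<Rightarrow> (nat \<Rightarrow> real) \<Rightarrow> (nat \<Rightarrow> real) \<Rightarrow> (nat \<Rightarrow> real) \<Rightarrow> real" where
  "qobj n D c x = (\<Sum>j\<in>{1..n}. D j * (x j)^2) + 2 * (\<Sum>j\<in>{1..n}. c j * x j)"

definition P_feasible :: "nat \<Rightarrow> nat \<Rightarrow> (nat \<Rightarrow> nat \<Rightarrow> real) \<Rightarrow> (nat \<Rightarrow> real) \<Rightarrow> (nat \<Rightarrow> real)
    \<Rightarrow> (nat \<Rightarrow> real) \<Rightarrow> bool" where
  "P_feasible n m a b xi x \<longleftrightarrow>
     (\<forall>i\<in>{1..m}. xi i * (\<Sum>j\<in>{1..n}. (x j)^2) + 2 * (\<Sum>j\<in>{1..n}. a i j * x j) \<le> b i)"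

definition c_star :: "nat \<Rightarrow> nat \<Rightarrow> (nat \<Rightarrow> real) \<Rightarrow> (nat \<Rightarrow> real) \<Rightarrow> (nat \<Rightarrow> nat \<Rightarrow> real)
    \<Rightarrow> (nat \<Rightarrow> real) \<Rightarrow> (nat \<Rightarrow> real) \<Rightarrow> ereal" where
  "c_star n m D c a b xi = Inf ((\<lambda>x. ereal (qobj n D c x)) ` {x. P_feasible n m a b xi x})"

definition shor_qf :: "nat \<Rightarrow> (nat \<Rightarrow> nat \<Rightarrow> real) \<Rightarrow> (nat \<Rightarrow> real) \<Rightarrow> (nat \<Rightarrow> real) \<Rightarrow> real" where
  "shor_qf n X x z = (\<Sum>j\<in>{1..n}. \<Sum>k\<in>{1..n}. z j * z k * (X j k - x j * x k))"

definition sym_on :: "nat \<Rightarrow> (nat \<Rightarrow> nat \<Rightarrow> real) \<Rightarrow> bool" where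
  "sym_on n X \<longleftrightarrow> (\<forall>j\<in>{1..n}. \<forall>k\<in>{1..n}. X j k = X k j)"

definition trace_N :: "nat \<Rightarrow> (nat \<Rightarrow> nat \<Rightarrow> real) \<Rightarrow> real" where
  "trace_N n X = (\<Sum>j\<in>{1..n}. X j j)"

definition shor_feasible :: "nat \<Rightarrow> nat \<Rightarrow> (nat \<Rightarrow> nat \<Rightarrow> real) \<Rightarrow> (nat \<Rightarrow> real) \<Rightarrow> (nat \<Rightarrow> real)
    \<Rightarrow> (nat \<Rightarrow> nat \<Rightarrow> real) \<Rightarrow> (nat \<Rightarrow> real) \<Rightarrow> bool" where
  "shor_feasible n m a b xi X x \<longleftrightarrow> sym_on n X \<and>
     (\<forall>i\<in>{1..m}. xi i * trace_N n X + 2 * (\<Sum>j\<in>{1..n}. a i j * x j) \<le> b i) \<and>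
     (\<forall>z. shor_qf n X x z \<ge> 0)"

definition shor_strictly_feasible :: "nat \<Rightarrow> nat \<Rightarrow> (nat \<Rightarrow> nat \<Rightarrow> real) \<Rightarrow> (nat \<Rightarrow> real) \<Rightarrow> (nat \<Rightarrow> real)
    \<Rightarrow> (nat \<Rightarrow> nat \<Rightarrow> real) \<Rightarrow> (nat \<Rightarrow> real) \<Rightarrow> bool" where
  "shor_strictly_feasible n m a b xi X x \<longleftrightarrow> sym_on n X \<and>
     (\<forall>i\<in>{1..m}. xi i * trace_N n X + 2 * (\<Sum>j\<in>{1..n}. a i j * x j) < b i) \<and>
     (\<forall>z. (\<exists>j\<in>{1..n}. z j \<noteq> 0) \<longrightarrow> shor_qf n X x z > 0)"

definition assumption1 :: "nat \<Rightarrow> nat \<Rightarrow> (nat \<Rightarrow> nat \<Rightarrow> real) \<Rightarrow> (nat \<Rightarrow> real) \<Rightarrow> (nat \<Rightarrow> real) \<Rightarrow> bool" where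
  "assumption1 n m a b xi \<longleftrightarrow>
     (\<exists>x. P_feasible n m a b xi x) \<and>
     (\<exists>y. (\<forall>i\<in>{1..m}. y i \<ge> 0) \<and> (\<Sum>i\<in>{1..m}. y i * xi i) > 0) \<and>
     (\<exists>X x. shor_strictly_feasible n m a b xi X x)"

text \<open>Relaxation (R1), with d1 = d_1^* = D 1.\<close>
definition R1_obj :: "nat \<Rightarrow> (nat \<Rightarrow> real) \<Rightarrow> (nat \<Rightarrow> real) \<Rightarrow> (nat \<Rightarrow> real) \<Rightarrow> real \<Rightarrow> real" where
  "R1_obj n D c x w1 = D 1 * w1 + (\<Sum>j\<in>{1..n}. (D j - D 1) * (x j)^2) + 2 * (\<Sum>j\<in>{1..n}. c j * x j)"

definition R1_feasible :: "nat \<Rightarrow> nat \<Rightarrow> (nat \<Rightarrow> nat \<Rightarrow> real) \<Rightarrow> (nat \<Rightarrow> real) \<Rightarrow> (nat \<Rightarrow> real)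
    \<Rightarrow> (nat \<Rightarrow> real) \<Rightarrow> real \<Rightarrow> bool" where
  "R1_feasible n m a b xi x w1 \<longleftrightarrow>
     (\<forall>i\<in>{1..m}. xi i * w1 + 2 * (\<Sum>j\<in>{1..n}. a i j * x j) \<le> b i) \<and>
     (\<Sum>j\<in>{1..n}. (x j)^2) \<le> w1"

definition R1_value :: "nat \<Rightarrow> nat \<Rightarrow> (nat \<Rightarrow> real) \<Rightarrow> (nat \<Rightarrow> real) \<Rightarrow> (nat \<Rightarrow> nat \<Rightarrow> real)
    \<Rightarrow> (nat \<Rightarrow> real) \<Rightarrow> (nat \<Rightarrow> real) \<Rightarrow> ereal" where
  "R1_value n m D c a b xi =
     Inf ((\<lambda>(x, w1). ereal (R1_obj n D c x w1)) ` {(x, w1). R1_feasible n m a b xi x w1})"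

definition aux_feasible :: "nat \<Rightarrow> nat \<Rightarrow> (nat \<Rightarrow> real) \<Rightarrow> (nat \<Rightarrow> real) \<Rightarrow> (nat \<Rightarrow> nat \<Rightarrow> real)
    \<Rightarrow> (nat \<Rightarrow> real) \<Rightarrow> (nat \<Rightarrow> real) \<Rightarrow> (nat \<Rightarrow> real) \<Rightarrow> (nat \<Rightarrow> real) \<Rightarrow> real \<Rightarrow> bool" where
  "aux_feasible n m D c a b xi mu x w1 \<longleftrightarrow>
     D 1 + (\<Sum>i\<in>{1..m}. xi i * mu i) = 0 \<and>
     c 1 + (\<Sum>i\<in>{1..m}. a i 1 * mu i) = 0 \<and>
     (\<forall>j\<in>{1..n} - {1}. (D j - D 1) * x j + c j + (\<Sum>i\<in>{1..m}. a i j * mu i) = 0) \<and>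
     (\<forall>i\<in>{1..m}. xi i * w1 + 2 * (\<Sum>j\<in>{1..n}. a i j * x j) \<le> b i) \<and>
     (\<forall>i\<in>{1..m}. mu i \<ge> 0)"

definition aux_value :: "nat \<Rightarrow> nat \<Rightarrow> (nat \<Rightarrow> real) \<Rightarrow> (nat \<Rightarrow> real) \<Rightarrow> (nat \<Rightarrow> nat \<Rightarrow> real)
    \<Rightarrow> (nat \<Rightarrow> real) \<Rightarrow> (nat \<Rightarrow> real) \<Rightarrow> ereal" where
  "aux_value n m D c a b xi =
     Inf ((\<lambda>(mu, x, w1). ereal ((\<Sum>j\<in>{1..n}. (x j)^2) - w1)) `
          {(mu, x, w1). aux_feasible n m D c a b xi mu x w1})"

end

theory Submission
  imports Defs "HOL-Analysis.Analysis"
begin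

(* Some nonnegative combination of the linear constraints has a positive w1-coefficient, and
   together with sum x_j^2 <= w1 this makes the feasible set of (R1) bounded, so (R1) attains its
   minimum at some (x, w1). If w1 > sum x_j^2, only the linear constraints are active there, and
   Farkas' lemma leaves two cases: either the negative gradient of the objective is a nonnegative
   combination of the active constraint gradients, and the multipliers together with (x, w1) form
   a feasible point of the auxiliary problem of value sum x_j^2 - w1 < 0; or there is a feasible
   descent direction, contradicting minimality. Hence w1 = sum x_j^2, so x is feasible for (P)
   with the same objective value, and the two optimal values agree. *)

definition inner_on :: "'b set \<Rightarrow> ('b \<Rightarrow> real) \<Rightarrow> ('b \<Rightarrow> real) \<Rightarrow> real" where
  "inner_on S x y = (\<Sum>j\<in>S. x j * y j)"

lemma inner_on_diff_left: "inner_on S (\<lambda>j. x j - c * y j) z = inner_on S x z - c * inner_on S y z"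
  by (simp add: inner_on_def sum_subtractf sum_distrib_left algebra_simps)

lemma inner_on_diff_right: "inner_on S z (\<lambda>j. x j - c * y j) = inner_on S z x - c * inner_on S z y"
  by (simp add: inner_on_def sum_subtractf sum_distrib_left algebra_simps)

lemma inner_on_commute: "inner_on S x y = inner_on S y x"
  by (simp add: inner_on_def mult.commute)

definition cone_combination :: "'b set \<Rightarrow> 'a set \<Rightarrow> ('a \<Rightarrow> 'b \<Rightarrow> real) \<Rightarrow> ('b \<Rightarrow> real) \<Rightarrow> bool" where
  "cone_combination S I g v \<longleftrightarrow> (\<exists>\<mu>. (\<forall>i\<in>I. 0 \<le> \<mu> i) \<and> (\<forall>j\<in>S. v j = (\<Sum>i\<in>I. \<mu> i * g i j)))"

definition separating_direction :: "'b set \<Rightarrow> 'a set \<Rightarrow> ('a \<Rightarrow> 'b \<Rightarrow> real) \<Rightarrow> ('b \<Rightarrow> real) \<Rightarrow> ('b \<Rightarrow> real) \<Rightarrow> bool" where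
  "separating_direction S I g v d \<longleftrightarrow> (\<forall>i\<in>I. inner_on S (g i) d \<le> 0) \<and> inner_on S v d > 0"

lemma cone_combination_insert:
  assumes "finite F" "k \<notin> F" "cone_combination S F g v"
  shows "cone_combination S (insert k F) g v"
proof -
  obtain \<mu> where \<mu>: "\<forall>i\<in>F. 0 \<le> \<mu> i" "\<forall>j\<in>S. v j = (\<Sum>i\<in>F. \<mu> i * g i j)"
    using assms(3) unfolding cone_combination_def by blast
  have "(\<Sum>i\<in>F. (\<mu>(k := 0)) i * g i j) = (\<Sum>i\<in>F. \<mu> i * g i j)" for j
    by (rule sum.cong) (use assms(2) in auto)
  then show ?thesis
    unfolding cone_combination_def using assms(1,2) \<mu>
    by (intro exI[of _ "\<mu>(k := 0)"]) auto
qed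

text \<open>Projecting all generators along d, where inner_on S (g k) d > 0, eliminates g k; its
  coefficient is recovered from the inner products with d.\<close>

lemma cone_combination_unproject:
  fixes S :: "'b set" and g :: "'a \<Rightarrow> 'b \<Rightarrow> real" and k :: 'a and d :: "'b \<Rightarrow> real"
  defines "\<gamma> \<equiv> inner_on S (g k) d"
  assumes "finite F" "k \<notin> F" "\<gamma> > 0" "\<forall>i\<in>F. inner_on S (g i) d \<le> 0" "inner_on S v d \<ge> 0"
    and "cone_combination S F (\<lambda>i j. g i j - inner_on S (g i) d / \<gamma> * g k j)
                              (\<lambda>j. v j - inner_on S v d / \<gamma> * g k j)"
  shows "cone_combination S (insert k F) g v"
proof -
  obtain \<nu> where \<nu>: "\<forall>i\<in>F. 0 \<le> \<nu> i"
    and comb: "\<forall>j\<in>S. v j - inner_on S v d / \<gamma> * g k j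
                 = (\<Sum>i\<in>F. \<nu> i * (g i j - inner_on S (g i) d / \<gamma> * g k j))"
    using assms(7) unfolding cone_combination_def by blast
  define s where "s = (\<Sum>i\<in>F. \<nu> i * inner_on S (g i) d)"
  define \<mu> where "\<mu> = \<nu>(k := (inner_on S v d - s) / \<gamma>)"
  have "s \<le> 0"
    unfolding s_def by (rule sum_nonpos) (use \<nu> assms(5) in \<open>auto intro: mult_nonneg_nonpos\<close>)
  then have "\<forall>i\<in>insert k F. 0 \<le> \<mu> i"
    using \<nu> assms(3,4,6) unfolding \<mu>_def by auto
  moreover have "v j = (\<Sum>i\<in>insert k F. \<mu> i * g i j)" if "j \<in> S" for j
  proof -
    have "(\<Sum>i\<in>F. \<nu> i * (g i j - inner_on S (g i) d / \<gamma> * g k j))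
        = (\<Sum>i\<in>F. \<nu> i * g i j - \<nu> i * inner_on S (g i) d / \<gamma> * g k j)"
      by (simp add: algebra_simps)
    also have "\<dots> = (\<Sum>i\<in>F. \<nu> i * g i j) - s / \<gamma> * g k j"
      by (simp add: s_def sum_subtractf sum_distrib_right sum_divide_distrib)
    moreover have "(\<Sum>i\<in>F. \<mu> i * g i j) = (\<Sum>i\<in>F. \<nu> i * g i j)"
      by (rule sum.cong) (use assms(3) in \<open>auto simp: \<mu>_def\<close>)
    ultimately show ?thesis
      using comb that assms(2,3,4) unfolding \<mu>_def by (simp add: field_simps)
  qed
  ultimately show ?thesis unfolding cone_combination_def by blast
qed

lemma separating_direction_unproject:
  fixes S :: "'b set" and g :: "'a \<Rightarrow> 'b \<Rightarrow> real" and k :: 'a and d :: "'b \<Rightarrow> real"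
  defines "\<gamma> \<equiv> inner_on S (g k) d"
  assumes "\<gamma> \<noteq> 0"
    and "separating_direction S F (\<lambda>i j. g i j - inner_on S (g i) d / \<gamma> * g k j)
                                  (\<lambda>j. v j - inner_on S v d / \<gamma> * g k j) d'"
  shows "separating_direction S (insert k F) g v (\<lambda>j. d' j - inner_on S (g k) d' / \<gamma> * d j)"
proof -
  have "inner_on S (g i) (\<lambda>j. d' j - inner_on S (g k) d' / \<gamma> * d j)
      = inner_on S (\<lambda>j. g i j - inner_on S (g i) d / \<gamma> * g k j) d'" for i
    unfolding inner_on_diff_left inner_on_diff_right by (simp add: inner_on_commute)
  moreover have "inner_on S v (\<lambda>j. d' j - inner_on S (g k) d' / \<gamma> * d j)
      = inner_on S (\<lambda>j. v j - inner_on S v d / \<gamma> * g k j) d'"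
    unfolding inner_on_diff_left inner_on_diff_right by (simp add: inner_on_commute)
  moreover have "inner_on S (g k) (\<lambda>j. d' j - inner_on S (g k) d' / \<gamma> * d j) = 0"
    using assms(2) unfolding inner_on_diff_right by (simp add: \<gamma>_def)
  ultimately show ?thesis
    using assms(3) by (simp add: separating_direction_def)
qed

lemma farkas_alternative:
  fixes g :: "'a \<Rightarrow> 'b \<Rightarrow> real"
  assumes "finite I" "finite S"
  shows "cone_combination S I g v \<or> (\<exists>d. separating_direction S I g v d)"
  using assms(1)
proof (induction I arbitrary: v g rule: finite_induct)
  case empty
  show ?case
  proof (cases "\<forall>j\<in>S. v j = 0")
    case True
    then show ?thesis by (simp add: cone_combination_def)
  next
    case False
    then obtain j0 where j0: "j0 \<in> S" "v j0 \<noteq> 0" by auto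
    have "0 < v j0 * v j0" using j0(2) by (auto simp: zero_less_mult_iff linorder_neq_iff)
    also have "\<dots> \<le> inner_on S v v"
      unfolding inner_on_def by (rule member_le_sum) (use j0 assms(2) in auto)
    finally show ?thesis by (auto simp: separating_direction_def)
  qed
next
  case (insert k F)
  show ?case
  proof (cases "cone_combination S F g v")
    case True
    then show ?thesis using cone_combination_insert[OF insert.hyps] by blast
  next
    case False
    then obtain d where d: "separating_direction S F g v d" using insert.IH by blast
    show ?thesis
    proof (cases "inner_on S (g k) d \<le> 0")
      case True
      then have "separating_direction S (insert k F) g v d"
        using d by (simp add: separating_direction_def)
      then show ?thesis by blast
    next
      case False
      define h where "h = (\<lambda>i j. g i j - inner_on S (g i) d / inner_on S (g k) d * g k j)"
      define u where "u = (\<lambda>j. v j - inner_on S v d / inner_on S (g k) d * g k j)"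
      from insert.IH[of h u] show ?thesis
      proof
        assume "cone_combination S F h u"
        then have "cone_combination S (insert k F) g v"
          using cone_combination_unproject[OF insert.hyps, of S g d v] d False
          unfolding h_def u_def separating_direction_def by simp
        then show ?thesis ..
      next
        assume "\<exists>d'. separating_direction S F h u d'"
        then obtain d' where "separating_direction S F h u d'" by blast
        then have "separating_direction S (insert k F) g v
            (\<lambda>j. d' j - inner_on S (g k) d' / inner_on S (g k) d * d j)"
          using separating_direction_unproject[of S g k d] False unfolding h_def u_def by simp
        then show ?thesis by blast
      qed
    qed
  qed
qed

lemma weighted_constraint_sum:
  assumes "R1_feasible n m a b xi x w" "\<forall>i\<in>{1..m}. y i \<ge> 0"
  shows "(\<Sum>i\<in>{1..m}. y i * xi i) * w + 2 * (\<Sum>j\<in>{1..n}. (\<Sum>i\<in>{1..m}. y i * a i j) * x j)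
           \<le> (\<Sum>i\<in>{1..m}. y i * b i)"
proof -
  have "(\<Sum>i\<in>{1..m}. y i * (xi i * w + 2 * (\<Sum>j\<in>{1..n}. a i j * x j))) \<le> (\<Sum>i\<in>{1..m}. y i * b i)"
    by (rule sum_mono) (use assms in \<open>auto simp: R1_feasible_def intro: mult_left_mono\<close>)
  moreover have "(\<Sum>i\<in>{1..m}. y i * (xi i * w + 2 * (\<Sum>j\<in>{1..n}. a i j * x j)))
      = (\<Sum>i\<in>{1..m}. y i * xi i) * w + 2 * (\<Sum>j\<in>{1..n}. (\<Sum>i\<in>{1..m}. y i * a i j) * x j)"
    by (simp add: distrib_left sum.distrib sum_distrib_left sum_distrib_right algebra_simps)
      (rule sum.swap)
  ultimately show ?thesis by simp
qed

lemma young_inequality_sum: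
  fixes \<alpha> x :: "'b \<Rightarrow> real"
  assumes "Y > 0"
  shows "- 2 * (\<Sum>j\<in>S. \<alpha> j * x j) \<le> 2 / Y * (\<Sum>j\<in>S. (\<alpha> j)\<^sup>2) + Y / 2 * (\<Sum>j\<in>S. (x j)\<^sup>2)"
proof -
  have "- 2 * (\<alpha> j * x j) \<le> 2 / Y * (\<alpha> j)\<^sup>2 + Y / 2 * (x j)\<^sup>2" for j
  proof -
    have "0 \<le> Y / 2 * (x j + 2 * \<alpha> j / Y)\<^sup>2" using assms by simp
    also have "\<dots> = Y / 2 * (x j)\<^sup>2 + 2 * (\<alpha> j * x j) + 2 / Y * (\<alpha> j)\<^sup>2"
      using assms by (simp add: power2_eq_square field_simps)
    finally show ?thesis by simp
  qed
  then have "(\<Sum>j\<in>S. - 2 * (\<alpha> j * x j)) \<le> (\<Sum>j\<in>S. 2 / Y * (\<alpha> j)\<^sup>2 + Y / 2 * (x j)\<^sup>2)"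
    by (rule sum_mono)
  then show ?thesis by (simp add: sum.distrib sum_distrib_left)
qed

lemma R1_feasible_bounded:
  assumes "\<forall>i\<in>{1..m}. y i \<ge> 0" "(\<Sum>i\<in>{1..m}. y i * xi i) > 0"
  obtains R W where "\<And>x w. R1_feasible n m a b xi x w \<Longrightarrow> (\<Sum>j\<in>{1..n}. (x j)\<^sup>2) \<le> R \<and> w \<le> W"
proof -
  define Y where "Y = (\<Sum>i\<in>{1..m}. y i * xi i)"
  define \<alpha> where "\<alpha> = (\<lambda>j. \<Sum>i\<in>{1..m}. y i * a i j)"
  define K where "K = (\<Sum>i\<in>{1..m}. y i * b i) + 2 / Y * (\<Sum>j\<in>{1..n}. (\<alpha> j)\<^sup>2)"
  have Y: "Y > 0" using assms(2) by (simp add: Y_def)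
  have "(\<Sum>j\<in>{1..n}. (x j)\<^sup>2) \<le> 2 * K / Y \<and> w \<le> (K + K) / Y"
    if f: "R1_feasible n m a b xi x w" for x w
  proof -
    define Q where "Q = (\<Sum>j\<in>{1..n}. (x j)\<^sup>2)"
    have "Q \<le> w" using f by (simp add: R1_feasible_def Q_def)
    moreover have "Y * w \<le> K + Y / 2 * Q"
      using weighted_constraint_sum[OF f assms(1)] young_inequality_sum[OF Y, of \<alpha> x "{1..n}"]
      unfolding K_def Q_def Y_def \<alpha>_def by linarith
    moreover have "Y * Q \<le> Y * w" using \<open>Q \<le> w\<close> Y by simp
    moreover have "Y / 2 * Q = Y * Q / 2" by simp
    ultimately have "Y * Q \<le> 2 * K" and "Y * w \<le> K + K" by linarith+
    then show ?thesis using Y by (simp add: Q_def pos_le_divide_eq mult.commute)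
  qed
  then show ?thesis using that by blast
qed

lemma R1_feasible_cong:
  assumes "\<And>j. j \<in> {1..n} \<Longrightarrow> x j = x' j"
  shows "R1_feasible n m a b xi x w = R1_feasible n m a b xi x' w"
proof -
  have "(\<Sum>j\<in>{1..n}. a i j * x j) = (\<Sum>j\<in>{1..n}. a i j * x' j)"
    "(\<Sum>j\<in>{1..n}. (x j)\<^sup>2) = (\<Sum>j\<in>{1..n}. (x' j)\<^sup>2)" for i
    using assms by (auto intro: sum.cong)
  then show ?thesis by (simp add: R1_feasible_def)
qed

lemma R1_obj_cong:
  assumes "\<And>j. j \<in> {1..n} \<Longrightarrow> x j = x' j"
  shows "R1_obj n D c x w = R1_obj n D c x' w"
proof -
  have "(\<Sum>j\<in>{1..n}. (D j - D 1) * (x j)\<^sup>2) = (\<Sum>j\<in>{1..n}. (D j - D 1) * (x' j)\<^sup>2)"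
    "(\<Sum>j\<in>{1..n}. c j * x j) = (\<Sum>j\<in>{1..n}. c j * x' j)"
    using assms by (auto intro: sum.cong)
  then show ?thesis by (simp add: R1_obj_def)
qed

lemma compact_coordinatewise:
  fixes T :: "'a \<Rightarrow> 'b::topological_space set"
  assumes "\<And>j. compact (T j)"
  shows "compact {x. \<forall>j. x j \<in> T j}"
proof -
  have "compactin (product_topology (\<lambda>_. euclidean) UNIV) (PiE UNIV T)"
    using assms by (simp add: compactin_PiE)
  moreover have "PiE UNIV T = {x. \<forall>j. x j \<in> T j}" by (auto simp: PiE_def Pi_def)
  ultimately show ?thesis by (simp add: euclidean_product_topology)
qed

lemma closed_R1_feasible_supported:
  "closed {(x, w). R1_feasible n m a b xi x w \<and> (\<forall>j. j \<notin> {1..n} \<longrightarrow> x j = 0)}"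
proof -
  have "{(x, w). R1_feasible n m a b xi x w \<and> (\<forall>j. j \<notin> {1..n} \<longrightarrow> x j = 0)} =
     (\<Inter>i\<in>{1..m}. {p. xi i * snd p + 2 * (\<Sum>j\<in>{1..n}. a i j * fst p j) \<le> b i})
     \<inter> {p. (\<Sum>j\<in>{1..n}. (fst p j)\<^sup>2) \<le> snd p} \<inter> (\<Inter>j\<in>-{1..n}. {p. fst p j = 0})"
    by (auto simp: R1_feasible_def)
  then show ?thesis
    by (simp only:) (intro closed_Int closed_INT ballI closed_Collect_le closed_Collect_eq
        continuous_intros continuous_on_product_then_coordinatewise)
qed

lemma compact_R1_feasible_supported:
  assumes "\<forall>i\<in>{1..m}. y i \<ge> 0" "(\<Sum>i\<in>{1..m}. y i * xi i) > 0"
  shows "compact {(x, w). R1_feasible n m a b xi x w \<and> (\<forall>j. j \<notin> {1..n} \<longrightarrow> x j = 0)}"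
    (is "compact ?C")
proof -
  obtain R W where RW: "\<And>x w. R1_feasible n m a b xi x w \<Longrightarrow> (\<Sum>j\<in>{1..n}. (x j)\<^sup>2) \<le> R \<and> w \<le> W"
    using R1_feasible_bounded[OF assms] by blast
  define T where "T = (\<lambda>j. if j \<in> {1..n} then {- sqrt R..sqrt R} else {0::real})"
  have "?C \<subseteq> {x. \<forall>j. x j \<in> T j} \<times> {0..W}"
  proof
    fix p assume "p \<in> ?C"
    then obtain x w where p: "p = (x, w)" and f: "R1_feasible n m a b xi x w"
      and z: "\<forall>j. j \<notin> {1..n} \<longrightarrow> x j = 0"
      by auto
    have "\<bar>x j\<bar> \<le> sqrt R" if "j \<in> {1..n}" for j
    proof -
      have "(x j)\<^sup>2 \<le> (\<Sum>j\<in>{1..n}. (x j)\<^sup>2)"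
        by (rule member_le_sum) (use that in auto)
      then show ?thesis using RW[OF f] by (simp add: real_le_rsqrt)
    qed
    then have "x j \<in> T j" for j
      using z by (auto simp: T_def abs_le_iff minus_le_iff)
    moreover have "0 \<le> w"
      using f sum_nonneg[of "{1..n}" "\<lambda>j. (x j)\<^sup>2"] by (simp add: R1_feasible_def)
    ultimately show "p \<in> {x. \<forall>j. x j \<in> T j} \<times> {0..W}" using RW[OF f] p by simp
  qed
  then have "?C = ?C \<inter> ({x. \<forall>j. x j \<in> T j} \<times> {0..W})" by blast
  also have "compact \<dots>"
    using closed_R1_feasible_supported[of n m a b xi]
    by (intro closed_Int_compact compact_Times compact_coordinatewise) (auto simp: T_def)
  finally show ?thesis .
qed

text \<open>Coordinates outside {1..n} are unconstrained, so the minimum is taken over the compact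
  set of feasible points supported on {1..n}.\<close>

lemma R1_has_minimizer:
  assumes "P_feasible n m a b xi x0" "\<forall>i\<in>{1..m}. y i \<ge> 0" "(\<Sum>i\<in>{1..m}. y i * xi i) > 0"
  obtains xs ws where "R1_feasible n m a b xi xs ws"
    "\<And>x w. R1_feasible n m a b xi x w \<Longrightarrow> R1_obj n D c xs ws \<le> R1_obj n D c x w"
proof -
  define C where "C = {(x, w). R1_feasible n m a b xi x w \<and> (\<forall>j. j \<notin> {1..n} \<longrightarrow> x j = 0)}"
  define supp where "supp = (\<lambda>x::nat \<Rightarrow> real. \<lambda>j. if j \<in> {1..n} then x j else 0)"
  have supp: "R1_obj n D c (supp x) w = R1_obj n D c x w" "(supp x, w) \<in> C \<longleftrightarrow> R1_feasible n m a b xi x w"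
    for x w
    using R1_feasible_cong[of n "supp x" x] R1_obj_cong[of n "supp x" x]
    by (auto simp: supp_def C_def)
  have "compact C"
    unfolding C_def using assms(2,3) by (rule compact_R1_feasible_supported)
  moreover have "(supp x0, \<Sum>j\<in>{1..n}. (x0 j)\<^sup>2) \<in> C"
    using assms(1) by (simp add: supp R1_feasible_def P_feasible_def)
  then have "C \<noteq> {}" by blast
  moreover have "continuous_on C (\<lambda>p. R1_obj n D c (fst p) (snd p))"
    unfolding R1_obj_def
    by (intro continuous_intros continuous_on_product_then_coordinatewise)
  ultimately obtain p where p: "p \<in> C"
    and p_min: "\<forall>q\<in>C. R1_obj n D c (fst p) (snd p) \<le> R1_obj n D c (fst q) (snd q)"
    by (blast dest: continuous_attains_inf)
  show ?thesis
  proof (rule that)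
    show "R1_feasible n m a b xi (fst p) (snd p)" using p by (auto simp: C_def)
    fix x w assume "R1_feasible n m a b xi x w"
    then have "(supp x, w) \<in> C" by (simp add: supp)
    from p_min[rule_format, OF this] show "R1_obj n D c (fst p) (snd p) \<le> R1_obj n D c x w"
      by (simp add: supp)
  qed
qed

lemma eventually_at_right_0_quadratic_neg:
  fixes c0 c1 c2 :: real
  assumes "c0 < 0"
  shows "\<forall>\<^sub>F t in at_right 0. c0 + t * c1 + t\<^sup>2 * c2 < 0"
proof -
  have "((\<lambda>t. c0 + t * c1 + t\<^sup>2 * c2) \<longlongrightarrow> c0 + 0 * c1 + 0\<^sup>2 * c2) (at_right 0)"
    by (intro tendsto_intros)
  then show ?thesis using assms by (simp add: order_tendstoD(2))
qed

lemma R1_constraint_along: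
  "(xi::real) * (w + t * d0) + 2 * (\<Sum>j\<in>A. a j * (x j + t * d j))
   = xi * w + 2 * (\<Sum>j\<in>A. a j * x j) + t * (xi * d0 + 2 * (\<Sum>j\<in>A. a j * d j))"
  by (simp add: algebra_simps sum.distrib sum_distrib_left)

lemma sum_squares_along:
  "(\<Sum>j\<in>A. (x j + t * d j)\<^sup>2 :: real) =
   (\<Sum>j\<in>A. (x j)\<^sup>2) + t * (2 * (\<Sum>j\<in>A. x j * d j)) + t\<^sup>2 * (\<Sum>j\<in>A. (d j)\<^sup>2)"
  by (simp add: power2_eq_square algebra_simps sum.distrib sum_distrib_left)

lemma R1_obj_along:
  "R1_obj n D c (\<lambda>j. x j + t * d j) (w + t * d0) = R1_obj n D c x w
   + t * (D 1 * d0 + (\<Sum>j\<in>{1..n}. (2 * (D j - D 1) * x j + 2 * c j) * d j))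
   + t\<^sup>2 * (\<Sum>j\<in>{1..n}. (D j - D 1) * (d j)\<^sup>2)"
proof -
  have "(D j - D 1) * (x j + t * d j)\<^sup>2 + 2 * (c j * (x j + t * d j))
      = (D j - D 1) * (x j)\<^sup>2 + 2 * (c j * x j) + t * ((2 * (D j - D 1) * x j + 2 * c j) * d j)
        + t\<^sup>2 * ((D j - D 1) * (d j)\<^sup>2)" for j
    by (simp add: power2_eq_square algebra_simps)
  then have "(\<Sum>j\<in>{1..n}. (D j - D 1) * (x j + t * d j)\<^sup>2) + 2 * (\<Sum>j\<in>{1..n}. c j * (x j + t * d j))
      = (\<Sum>j\<in>{1..n}. (D j - D 1) * (x j)\<^sup>2) + 2 * (\<Sum>j\<in>{1..n}. c j * x j)
        + t * (\<Sum>j\<in>{1..n}. (2 * (D j - D 1) * x j + 2 * c j) * d j)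
        + t\<^sup>2 * (\<Sum>j\<in>{1..n}. (D j - D 1) * (d j)\<^sup>2)"
    by (simp add: sum_distrib_left sum.distrib[symmetric])
  then show ?thesis unfolding R1_obj_def by (simp add: algebra_simps)
qed

definition R1_active :: "nat \<Rightarrow> nat \<Rightarrow> (nat \<Rightarrow> nat \<Rightarrow> real) \<Rightarrow> (nat \<Rightarrow> real) \<Rightarrow> (nat \<Rightarrow> real)
    \<Rightarrow> (nat \<Rightarrow> real) \<Rightarrow> real \<Rightarrow> nat set" where
  "R1_active n m a b xi x w = {i\<in>{1..m}. xi i * w + 2 * (\<Sum>j\<in>{1..n}. a i j * x j) = b i}"

lemma R1_feasible_along_eventually:
  assumes f: "R1_feasible n m a b xi xs ws"
    and slack: "(\<Sum>j\<in>{1..n}. (xs j)\<^sup>2) < ws"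
    and active: "\<forall>i\<in>R1_active n m a b xi xs ws. xi i * d0 + 2 * (\<Sum>j\<in>{1..n}. a i j * d j) \<le> 0"
  shows "\<forall>\<^sub>F t in at_right 0. R1_feasible n m a b xi (\<lambda>j. xs j + t * d j) (ws + t * d0)"
proof -
  define L where "L = (\<lambda>i t. xi i * (ws + t * d0) + 2 * (\<Sum>j\<in>{1..n}. a i j * (xs j + t * d j)))"
  have "\<forall>\<^sub>F t in at_right 0. (\<Sum>j\<in>{1..n}. (xs j)\<^sup>2) - ws
      + t * (2 * (\<Sum>j\<in>{1..n}. xs j * d j) - d0) + t\<^sup>2 * (\<Sum>j\<in>{1..n}. (d j)\<^sup>2) < 0"
    using slack by (intro eventually_at_right_0_quadratic_neg) simp
  then have ev_cone: "\<forall>\<^sub>F t in at_right 0. (\<Sum>j\<in>{1..n}. (xs j + t * d j)\<^sup>2) \<le> ws + t * d0"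
    by eventually_elim (simp add: sum_squares_along algebra_simps)
  have "\<forall>\<^sub>F t in at_right 0. L i t \<le> b i" if i: "i \<in> {1..m}" for i
  proof (cases "i \<in> R1_active n m a b xi xs ws")
    case True
    from eventually_at_right_less[of "0::real"] show ?thesis
    proof (rule eventually_mono)
      fix t :: real assume "0 < t"
      then have "t * (xi i * d0 + 2 * (\<Sum>j\<in>{1..n}. a i j * d j)) \<le> 0"
        using active True by (simp add: mult_nonneg_nonpos)
      then show "L i t \<le> b i" using True by (simp add: L_def R1_constraint_along R1_active_def)
    qed
  next
    case False
    then have "xi i * ws + 2 * (\<Sum>j\<in>{1..n}. a i j * xs j) - b i < 0"
      using f i by (auto simp: R1_feasible_def R1_active_def less_le)
    from eventually_at_right_0_quadratic_neg[OF this, of "xi i * d0 + 2 * (\<Sum>j\<in>{1..n}. a i j * d j)" 0]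
    show ?thesis
      by eventually_elim (simp add: L_def R1_constraint_along)
  qed
  then have "\<forall>\<^sub>F t in at_right 0. \<forall>i\<in>{1..m}. L i t \<le> b i"
    by (simp add: eventually_ball_finite)
  with ev_cone show ?thesis
    by eventually_elim (simp add: R1_feasible_def L_def)
qed

text \<open>The left-hand side of the conclusion is the derivative of R1_obj at (xs, ws) in the
  direction (d, d0).\<close>

lemma R1_minimizer_no_descent:
  assumes f: "R1_feasible n m a b xi xs ws"
    and opt: "\<And>x w. R1_feasible n m a b xi x w \<Longrightarrow> R1_obj n D c xs ws \<le> R1_obj n D c x w"
    and slack: "(\<Sum>j\<in>{1..n}. (xs j)\<^sup>2) < ws"
    and active: "\<forall>i\<in>R1_active n m a b xi xs ws. xi i * d0 + 2 * (\<Sum>j\<in>{1..n}. a i j * d j) \<le> 0"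
  shows "D 1 * d0 + (\<Sum>j\<in>{1..n}. (2 * (D j - D 1) * xs j + 2 * c j) * d j) \<ge> 0"
proof (rule ccontr)
  define g where "g = D 1 * d0 + (\<Sum>j\<in>{1..n}. (2 * (D j - D 1) * xs j + 2 * c j) * d j)"
  define q where "q = (\<Sum>j\<in>{1..n}. (D j - D 1) * (d j)\<^sup>2)"
  assume "\<not> g \<ge> 0"
  then have "\<forall>\<^sub>F t in at_right 0. g + t * q < 0"
    using eventually_at_right_0_quadratic_neg[of g q 0] by simp
  with eventually_at_right_less[of "0::real"] R1_feasible_along_eventually[OF f slack active]
  have "\<forall>\<^sub>F t in at_right 0. 0 < t \<and> g + t * q < 0
      \<and> R1_feasible n m a b xi (\<lambda>j. xs j + t * d j) (ws + t * d0)"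
    by eventually_elim simp
  then obtain t :: real where t: "0 < t" "g + t * q < 0"
    and feas: "R1_feasible n m a b xi (\<lambda>j. xs j + t * d j) (ws + t * d0)"
    using eventually_happens'[OF trivial_limit_at_right_real] by blast
  have "R1_obj n D c (\<lambda>j. xs j + t * d j) (ws + t * d0) = R1_obj n D c xs ws + t * (g + t * q)"
    unfolding R1_obj_along by (simp add: g_def q_def algebra_simps power2_eq_square)
  also have "\<dots> < R1_obj n D c xs ws"
    using t by (simp add: mult_pos_neg)
  finally show False
    using opt[OF feas] by simp
qed

lemma aux_value_le_of_stationary:
  assumes "n \<ge> 1" "R1_feasible n m a b xi x w" "\<forall>i\<in>{1..m}. mu i \<ge> 0"
    and "D 1 + (\<Sum>i\<in>{1..m}. xi i * mu i) = 0"
    and "\<forall>j\<in>{1..n}. (D j - D 1) * x j + c j + (\<Sum>i\<in>{1..m}. a i j * mu i) = 0"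
  shows "aux_value n m D c a b xi \<le> (\<Sum>j\<in>{1..n}. (x j)\<^sup>2) - w"
proof -
  have "aux_feasible n m D c a b xi mu x w"
    using assms(1,2,3,4) assms(5)[rule_format, of 1] assms(5)
    by (auto simp: aux_feasible_def R1_feasible_def)
  then show ?thesis
    unfolding aux_value_def by (intro Inf_lower) (auto intro!: image_eqI[where x="(mu, x, w)"])
qed

lemma inner_on_atLeast0AtMost_split:
  fixes n :: nat
  shows "inner_on {0..n} f d = f 0 * d 0 + (\<Sum>j\<in>{1..n}. f j * d j)"
  unfolding inner_on_def using sum.atLeast_Suc_atMost[of 0 n "\<lambda>j. f j * d j"] by simp

text \<open>Gradients as vectors indexed by {0..n}: coordinate 0 is the variable w1, coordinates
  1..n are x.\<close>

definition R1_constraint_gradient :: "(nat \<Rightarrow> nat \<Rightarrow> real) \<Rightarrow> (nat \<Rightarrow> real) \<Rightarrow> nat \<Rightarrow> nat \<Rightarrow> real" where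
  "R1_constraint_gradient a xi i j = (if j = 0 then xi i else 2 * a i j)"

definition R1_obj_neg_gradient :: "(nat \<Rightarrow> real) \<Rightarrow> (nat \<Rightarrow> real) \<Rightarrow> (nat \<Rightarrow> real) \<Rightarrow> nat \<Rightarrow> real" where
  "R1_obj_neg_gradient D c x j = (if j = 0 then - D 1 else - (2 * (D j - D 1) * x j + 2 * c j))"

lemma inner_on_R1_constraint_gradient:
  "inner_on {0..n} (R1_constraint_gradient a xi i) d = xi i * d 0 + 2 * (\<Sum>j\<in>{1..n}. a i j * d j)"
  by (simp add: inner_on_atLeast0AtMost_split R1_constraint_gradient_def sum_distrib_left mult.assoc)

lemma inner_on_R1_obj_neg_gradient:
  "inner_on {0..n} (R1_obj_neg_gradient D c x) d
     = - (D 1 * d 0 + (\<Sum>j\<in>{1..n}. (2 * (D j - D 1) * x j + 2 * c j) * d j))"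
proof -
  have "(\<Sum>j\<in>{1..n}. R1_obj_neg_gradient D c x j * d j)
      = (\<Sum>j\<in>{1..n}. - ((2 * (D j - D 1) * x j + 2 * c j) * d j))"
    by (rule sum.cong) (auto simp: R1_obj_neg_gradient_def algebra_simps)
  then show ?thesis
    by (simp add: inner_on_atLeast0AtMost_split R1_obj_neg_gradient_def sum_negf)
qed

text \<open>The coefficients of the cone combination are KKT multipliers of the active constraints;
  extended by 0 they form, together with (x, w), a feasible point of the auxiliary problem.\<close>

lemma aux_value_le_of_cone_combination:
  assumes "n \<ge> 1" "R1_feasible n m a b xi x w"
    and "cone_combination {0..n} (R1_active n m a b xi x w) (R1_constraint_gradient a xi)
           (R1_obj_neg_gradient D c x)"
  shows "aux_value n m D c a b xi \<le> (\<Sum>j\<in>{1..n}. (x j)\<^sup>2) - w"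
proof -
  define Act where "Act = R1_active n m a b xi x w"
  obtain \<mu> where \<mu>: "\<forall>i\<in>Act. 0 \<le> \<mu> i"
    and comb: "\<forall>j\<in>{0..n}. R1_obj_neg_gradient D c x j = (\<Sum>i\<in>Act. \<mu> i * R1_constraint_gradient a xi i j)"
    using assms(3) unfolding cone_combination_def Act_def by blast
  define mu where "mu = (\<lambda>i. if i \<in> Act then \<mu> i else 0)"
  have mu_sum: "(\<Sum>i\<in>{1..m}. h i * mu i) = (\<Sum>i\<in>Act. \<mu> i * h i)" for h
  proof -
    have "(\<Sum>i\<in>{1..m}. h i * mu i) = (\<Sum>i\<in>{1..m}. if i \<in> Act then \<mu> i * h i else 0)"
      by (rule sum.cong) (auto simp: mu_def)
    also have "\<dots> = (\<Sum>i\<in>{1..m} \<inter> Act. \<mu> i * h i)"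
      by (simp add: sum.inter_restrict)
    also have "{1..m} \<inter> Act = Act" by (auto simp: Act_def R1_active_def)
    finally show ?thesis .
  qed
  show ?thesis
  proof (rule aux_value_le_of_stationary[OF assms(1,2)])
    show "\<forall>i\<in>{1..m}. 0 \<le> mu i" using \<mu> by (simp add: mu_def)
    show "D 1 + (\<Sum>i\<in>{1..m}. xi i * mu i) = 0"
      using comb[rule_format, of 0] mu_sum[of xi]
      by (simp add: R1_obj_neg_gradient_def R1_constraint_gradient_def)
    show "\<forall>j\<in>{1..n}. (D j - D 1) * x j + c j + (\<Sum>i\<in>{1..m}. a i j * mu i) = 0"
    proof
      fix j assume j: "j \<in> {1..n}"
      then have "- (2 * (D j - D 1) * x j + 2 * c j) = 2 * (\<Sum>i\<in>Act. \<mu> i * a i j)"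
        using comb[rule_format, of j]
        by (simp add: R1_obj_neg_gradient_def R1_constraint_gradient_def sum_distrib_left mult.left_commute)
      then show "(D j - D 1) * x j + c j + (\<Sum>i\<in>{1..m}. a i j * mu i) = 0"
        using mu_sum[of "\<lambda>i. a i j"] by (simp add: algebra_simps)
    qed
  qed
qed

lemma R1_minimizer_tight:
  assumes "n \<ge> 1" "aux_value n m D c a b xi \<ge> 0"
    and f: "R1_feasible n m a b xi xs ws"
    and opt: "\<And>x w. R1_feasible n m a b xi x w \<Longrightarrow> R1_obj n D c xs ws \<le> R1_obj n D c x w"
  shows "ws = (\<Sum>j\<in>{1..n}. (xs j)\<^sup>2)"
proof (rule ccontr)
  assume "ws \<noteq> (\<Sum>j\<in>{1..n}. (xs j)\<^sup>2)"
  with f have slack: "(\<Sum>j\<in>{1..n}. (xs j)\<^sup>2) < ws" by (simp add: R1_feasible_def)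
  have "finite (R1_active n m a b xi xs ws)" by (simp add: R1_active_def)
  from farkas_alternative[OF this finite_atLeastAtMost, of 0 n "R1_constraint_gradient a xi"
      "R1_obj_neg_gradient D c xs"]
  show False
  proof
    assume "cone_combination {0..n} (R1_active n m a b xi xs ws) (R1_constraint_gradient a xi)
              (R1_obj_neg_gradient D c xs)"
    from aux_value_le_of_cone_combination[OF assms(1) f this]
    have "aux_value n m D c a b xi \<le> (\<Sum>j\<in>{1..n}. (xs j)\<^sup>2) - ws" .
    also have "\<dots> < 0" using slack by simp
    finally show False using assms(2) by simp
  next
    assume "\<exists>d. separating_direction {0..n} (R1_active n m a b xi xs ws)
                  (R1_constraint_gradient a xi) (R1_obj_neg_gradient D c xs) d"
    then obtain d where "separating_direction {0..n} (R1_active n m a b xi xs ws)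
                  (R1_constraint_gradient a xi) (R1_obj_neg_gradient D c xs) d" by blast
    then show False
      using R1_minimizer_no_descent[OF f opt slack, of "d 0" d]
      by (simp add: separating_direction_def inner_on_R1_constraint_gradient inner_on_R1_obj_neg_gradient)
  qed
qed

lemma R1_obj_on_cone_boundary: "R1_obj n D c x (\<Sum>j\<in>{1..n}. (x j)\<^sup>2) = qobj n D c x"
proof -
  have "D 1 * (\<Sum>j\<in>{1..n}. (x j)\<^sup>2) + (\<Sum>j\<in>{1..n}. (D j - D 1) * (x j)\<^sup>2)
      = (\<Sum>j\<in>{1..n}. D j * (x j)\<^sup>2)"
    by (simp add: sum_distrib_left sum.distrib[symmetric] algebra_simps)
  then show ?thesis unfolding R1_obj_def qobj_def by simp
qed

lemma R1_feasible_on_cone_boundary_iff: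
  "R1_feasible n m a b xi x (\<Sum>j\<in>{1..n}. (x j)\<^sup>2) \<longleftrightarrow> P_feasible n m a b xi x"
  by (simp add: R1_feasible_def P_feasible_def)

lemma R1_value_le_c_star: "R1_value n m D c a b xi \<le> c_star n m D c a b xi"
  unfolding c_star_def R1_value_def
proof (rule Inf_mono)
  fix e assume "e \<in> (\<lambda>x. ereal (qobj n D c x)) ` {x. P_feasible n m a b xi x}"
  then obtain x where "P_feasible n m a b xi x" "e = ereal (qobj n D c x)" by auto
  then show "\<exists>e'\<in>(\<lambda>(x, w). ereal (R1_obj n D c x w)) ` {(x, w). R1_feasible n m a b xi x w}. e' \<le> e"
    using R1_obj_on_cone_boundary[of n D c x] R1_feasible_on_cone_boundary_iff[of n m a b xi x]
    by (intro bexI[of _ e] image_eqI[of _ _ "(x, \<Sum>j\<in>{1..n}. (x j)\<^sup>2)"]) auto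
qed

theorem proposition4:
  fixes n m :: nat and D c b xi :: "nat \<Rightarrow> real" and a :: "nat \<Rightarrow> nat \<Rightarrow> real"
  assumes "n \<ge> 1"
    and "assumption1 n m a b xi"
    and "\<forall>j\<in>{1..n}. j \<noteq> 1 \<longrightarrow> D 1 < D j"
    and "aux_value n m D c a b xi \<ge> 0"
  shows "R1_value n m D c a b xi = c_star n m D c a b xi"
proof -
  obtain x0 y where x0: "P_feasible n m a b xi x0"
    and y: "\<forall>i\<in>{1..m}. y i \<ge> 0" "(\<Sum>i\<in>{1..m}. y i * xi i) > 0"
    using assms(2) unfolding assumption1_def by blast
  obtain xs ws where f: "R1_feasible n m a b xi xs ws"
    and opt: "\<And>x w. R1_feasible n m a b xi x w \<Longrightarrow> R1_obj n D c xs ws \<le> R1_obj n D c x w"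
    using R1_has_minimizer[OF x0 y] by blast
  have ws: "ws = (\<Sum>j\<in>{1..n}. (xs j)\<^sup>2)"
    using R1_minimizer_tight[OF assms(1,4) f opt] .
  have "c_star n m D c a b xi \<le> ereal (R1_obj n D c xs ws)"
    using f unfolding c_star_def ws R1_obj_on_cone_boundary R1_feasible_on_cone_boundary_iff
    by (intro Inf_lower) auto
  also have "\<dots> \<le> R1_value n m D c a b xi"
    unfolding R1_value_def using opt by (auto intro!: Inf_greatest)
  finally show ?thesis
    using R1_value_le_c_star by (rule antisym[rotated])
qed

end
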